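(* (a) Let $\{U_\alpha\}$ ($U_\alpha=gE_\alpha g^{-1}$, $g\in G_{<0}$) be a solution of the $(\mathrm{sl}_n(\mathbb{C}),\mathfrak{t})$-hierarchy and set $A_{m\alpha}:=\pi_{\geqslant0}(U_\alpha z^m)-U_\alpha z^m$ for $m\ge0$. Then for all $m_1,m_2\ge0$ and all $\alpha_1,\alpha_2$: $$\partial_{m_1\alpha_1}(A_{m_2\alpha_2})-\partial_{m_2\alpha_2}(A_{m_1\alpha_1})-[A_{m_1\alpha_1},A_{m_2\alpha_2}]=0.$$ (b) Let $\{V_\beta\}$ ($V_\beta=KE_\beta zK^{-1}$, $K\in G_{\leqslant0}$) be a solution of the strict $(\mathrm{sl}_n(\mathbb{C}),\mathfrak{t})$-hierarchy and set $D_{m\beta}:=\pi_{>0}(V_\beta z^{m-1})-V_\beta z^{m-1}$ for $m\ge1$. Then for all $m_1,m_2\ge1$ and all $\beta_1,\beta_2$: $$\partial_{m_1\beta_1}(D_{m_2\beta_2})-\partial_{m_2\beta_2}(D_{m_1\beta_1})-[D_{m_1\beta_1},D_{m_2\beta_2}]=0.$$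
   Context: $R$ is a commutative $\mathbb{C}$-algebra; $\mathrm{gl}_n(R)[z,z^{-1})$ is the algebra of formal series $\sum_{i=-\infty}^{N}X_iz^i$, $X_i\in\mathrm{gl}_n(R)$, bracket $[X,Y]=\sum[X_i,Y_j]z^{i+j}$; $\pi_{\geqslant0}$ (resp. $\pi_{>0}$) keeps the terms with $i\ge0$ (resp. $i\ge1$). $\mathfrak{t}\subset\mathrm{sl}_n(\mathbb{C})$ is commutative of maximal dimension $r$ with basis $E_1,\dots,E_r$. $G_{<0}=\{\mathrm{Id}+\sum_{i\ge1}Y_iz^{-i}\}$, $G_{\leqslant0}=\{\sum_{j\ge0}K_jz^{-j}\mid K_0\text{ invertible}\}$ (coefficients in $\mathrm{gl}_n(R)$). $R$ carries commuting $\mathbb{C}$-linear derivations $\partial_{m\alpha}$ ($m\ge0$ in (a), $m\ge1$ in (b), $1\le\alpha\le r$), acting coefficientwise. A solution of the $(\mathrm{sl}_n(\mathbb{C}),\mathfrak{t})$-hierarchy means $\partial_{m\alpha_1}(U_{\alpha_2})=[\pi_{\geqslant0}(U_{\alpha_1}z^m),U_{\alpha_2}]$ for all $m\ge0$, $\alpha_1,\alpha_2$; a solution of the strict hierarchy means $\partial_{m\beta_1}(V_{\beta_2})=[\pi_{>0}(V_{\beta_1}z^{m-1}),V_{\beta_2}]$ for all $m\ge1$, $\beta_1,\beta_2$. *)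

theory Defs
  imports Complex_Main
begin

type_synonym ('a, 'n) mat = "'n \<Rightarrow> 'n \<Rightarrow> 'a"

definition mzero :: "('a::zero, 'n) mat" where
  "mzero = (\<lambda>i j. 0)"

definition mone :: "('a::{zero,one}, 'n) mat" where
  "mone = (\<lambda>i j. if i = j then 1 else 0)"

definition madd :: "('a::plus, 'n) mat \<Rightarrow> ('a, 'n) mat \<Rightarrow> ('a, 'n) mat" where
  "madd A B = (\<lambda>i j. A i j + B i j)"

definition msub :: "('a::minus, 'n) mat \<Rightarrow> ('a, 'n) mat \<Rightarrow> ('a, 'n) mat" where
  "msub A B = (\<lambda>i j. A i j - B i j)"

definition msmult :: "'a::times \<Rightarrow> ('a, 'n) mat \<Rightarrow> ('a, 'n) mat" where
  "msmult c A = (\<lambda>i j. c * A i j)"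

definition mmul :: "('a::comm_ring_1, 'n::finite) mat \<Rightarrow> ('a, 'n) mat \<Rightarrow> ('a, 'n) mat" where
  "mmul A B = (\<lambda>i j. \<Sum>k\<in>UNIV. A i k * B k j)"

definition mtrace :: "('a::comm_ring_1, 'n::finite) mat \<Rightarrow> 'a" where
  "mtrace A = (\<Sum>i\<in>UNIV. A i i)"

definition minvertible :: "('a::comm_ring_1, 'n::finite) mat \<Rightarrow> bool" where
  "minvertible A \<longleftrightarrow> (\<exists>B. mmul A B = mone \<and> mmul B A = mone)"

definition map_mat :: "('a \<Rightarrow> 'b) \<Rightarrow> ('a, 'n) mat \<Rightarrow> ('b, 'n) mat" where
  "map_mat f A = (\<lambda>i j. f (A i j))"

definition sl :: "(complex, 'n::finite) mat set" where
  "sl = {M. mtrace M = 0}"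

definition csubspace :: "(complex, 'n::finite) mat set \<Rightarrow> bool" where
  "csubspace S \<longleftrightarrow> mzero \<in> S \<and> (\<forall>A\<in>S. \<forall>B\<in>S. madd A B \<in> S)
     \<and> (\<forall>c. \<forall>A\<in>S. msmult c A \<in> S)"

definition comm_subalg :: "(complex, 'n::finite) mat set \<Rightarrow> bool" where
  "comm_subalg S \<longleftrightarrow> csubspace S \<and> S \<subseteq> sl \<and> (\<forall>A\<in>S. \<forall>B\<in>S. mmul A B = mmul B A)"

definition maximal_comm_subalg :: "(complex, 'n::finite) mat set \<Rightarrow> bool" where
  "maximal_comm_subalg T \<longleftrightarrow> comm_subalg T \<and> (\<forall>S. comm_subalg S \<and> T \<subseteq> S \<longrightarrow> S = T)"

definition lincomb :: "(nat \<Rightarrow> complex) \<Rightarrow> (nat \<Rightarrow> (complex, 'n) mat) \<Rightarrow> nat \<Rightarrow> (complex, 'n) mat" where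
  "lincomb c E r = (\<lambda>i j. \<Sum>\<alpha>=1..r. c \<alpha> * E \<alpha> i j)"

definition is_basis :: "(nat \<Rightarrow> (complex, 'n) mat) \<Rightarrow> nat \<Rightarrow> (complex, 'n) mat set \<Rightarrow> bool" where
  "is_basis E r T \<longleftrightarrow> T = {lincomb c E r | c. True}
     \<and> (\<forall>c. lincomb c E r = mzero \<longrightarrow> (\<forall>\<alpha>\<in>{1..r}. c \<alpha> = 0))"

text \<open>A series \<Sum>_{i \<le> N} X_i z^i is represented by its coefficient function.\<close>
type_synonym ('a, 'n) ser = "int \<Rightarrow> ('a, 'n) mat"

definition is_ser :: "('a::zero, 'n) ser \<Rightarrow> bool" where
  "is_ser X \<longleftrightarrow> (\<exists>N. \<forall>i>N. X i = mzero)"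

text \<open>product: the coefficient of z^k is the (finite, for series bounded above) sum
  of X_i Y_{k-i}\<close>
definition smul :: "('a::comm_ring_1, 'n::finite) ser \<Rightarrow> ('a, 'n) ser \<Rightarrow> ('a, 'n) ser" where
  "smul X Y = (\<lambda>k a b. \<Sum>i\<in>{i. X i \<noteq> mzero \<and> Y (k - i) \<noteq> mzero}. mmul (X i) (Y (k - i)) a b)"

definition ssub :: "('a::comm_ring_1, 'n) ser \<Rightarrow> ('a, 'n) ser \<Rightarrow> ('a, 'n) ser" where
  "ssub X Y = (\<lambda>k. msub (X k) (Y k))"

definition szero :: "('a::comm_ring_1, 'n) ser" where
  "szero = (\<lambda>k. mzero)"

definition sone :: "('a::comm_ring_1, 'n) ser" where
  "sone = (\<lambda>k. if k = 0 then mone else mzero)"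

definition sconst :: "('a::comm_ring_1, 'n) mat \<Rightarrow> ('a, 'n) ser" where
  "sconst A = (\<lambda>k. if k = 0 then A else mzero)"

definition sbr :: "('a::comm_ring_1, 'n::finite) ser \<Rightarrow> ('a, 'n) ser \<Rightarrow> ('a, 'n) ser" where
  "sbr X Y = ssub (smul X Y) (smul Y X)"

definition zpow :: "('a, 'n) ser \<Rightarrow> int \<Rightarrow> ('a, 'n) ser" where
  "zpow X m = (\<lambda>k. X (k - m))"

definition pi_ge0 :: "('a::zero, 'n) ser \<Rightarrow> ('a, 'n) ser" where
  "pi_ge0 X = (\<lambda>k. if k \<ge> 0 then X k else mzero)"

definition pi_gt0 :: "('a::zero, 'n) ser \<Rightarrow> ('a, 'n) ser" where
  "pi_gt0 X = (\<lambda>k. if k > 0 then X k else mzero)"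

definition sder :: "('a \<Rightarrow> 'a) \<Rightarrow> ('a, 'n) ser \<Rightarrow> ('a, 'n) ser" where
  "sder d X = (\<lambda>k a b. d (X k a b))"

definition G_lt0 :: "('a::comm_ring_1, 'n::finite) ser \<Rightarrow> bool" where
  "G_lt0 g \<longleftrightarrow> g 0 = mone \<and> (\<forall>i>0. g i = mzero)"

definition G_le0 :: "('a::comm_ring_1, 'n::finite) ser \<Rightarrow> bool" where
  "G_le0 K \<longleftrightarrow> (\<forall>i>0. K i = mzero) \<and> minvertible (K 0)"

definition is_sinv :: "('a::comm_ring_1, 'n::finite) ser \<Rightarrow> ('a, 'n) ser \<Rightarrow> bool" where
  "is_sinv G Ginv \<longleftrightarrow> is_ser Ginv \<and> smul G Ginv = sone \<and> smul Ginv G = sone"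

text \<open>emb is the structure map C \<rightarrow> R of the C-algebra R\<close>
definition calg_hom :: "(complex \<Rightarrow> 'a::comm_ring_1) \<Rightarrow> bool" where
  "calg_hom emb \<longleftrightarrow> emb 0 = 0 \<and> emb 1 = 1 \<and> (\<forall>x y. emb (x + y) = emb x + emb y)
     \<and> (\<forall>x y. emb (x * y) = emb x * emb y)"

definition C_derivation :: "(complex \<Rightarrow> 'a::comm_ring_1) \<Rightarrow> ('a \<Rightarrow> 'a) \<Rightarrow> bool" where
  "C_derivation emb D \<longleftrightarrow> (\<forall>x y. D (x + y) = D x + D y)
     \<and> (\<forall>c x. D (emb c * x) = emb c * D x)
     \<and> (\<forall>x y. D (x * y) = x * D y + D x * y)"

definition comm_derivations ::
  "(complex \<Rightarrow> 'a::comm_ring_1) \<Rightarrow> (nat \<Rightarrow> nat \<Rightarrow> 'a \<Rightarrow> 'a) \<Rightarrow> nat set \<Rightarrow> nat \<Rightarrow> bool" where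
  "comm_derivations emb d M r \<longleftrightarrow>
     (\<forall>m\<in>M. \<forall>\<alpha>\<in>{1..r}. C_derivation emb (d m \<alpha>))
     \<and> (\<forall>m1\<in>M. \<forall>a1\<in>{1..r}. \<forall>m2\<in>M. \<forall>a2\<in>{1..r}. \<forall>x.
          d m1 a1 (d m2 a2 x) = d m2 a2 (d m1 a1 x))"

definition Uop :: "(complex \<Rightarrow> 'a::comm_ring_1) \<Rightarrow> (nat \<Rightarrow> (complex, 'n::finite) mat)
    \<Rightarrow> ('a, 'n) ser \<Rightarrow> ('a, 'n) ser \<Rightarrow> nat \<Rightarrow> ('a, 'n) ser" where
  "Uop emb E g ginv \<alpha> = smul (smul g (sconst (map_mat emb (E \<alpha>)))) ginv"

definition Vop :: "(complex \<Rightarrow> 'a::comm_ring_1) \<Rightarrow> (nat \<Rightarrow> (complex, 'n::finite) mat)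
    \<Rightarrow> ('a, 'n) ser \<Rightarrow> ('a, 'n) ser \<Rightarrow> nat \<Rightarrow> ('a, 'n) ser" where
  "Vop emb E K Kinv \<beta> = smul (smul K (zpow (sconst (map_mat emb (E \<beta>))) 1)) Kinv"

definition hierarchy_solution ::
  "nat \<Rightarrow> (nat \<Rightarrow> nat \<Rightarrow> 'a \<Rightarrow> 'a) \<Rightarrow> (nat \<Rightarrow> ('a::comm_ring_1, 'n::finite) ser) \<Rightarrow> bool" where
  "hierarchy_solution r d U \<longleftrightarrow>
     (\<forall>m. \<forall>a1\<in>{1..r}. \<forall>a2\<in>{1..r}.
        sder (d m a1) (U a2) = sbr (pi_ge0 (zpow (U a1) (int m))) (U a2))"

definition strict_hierarchy_solution ::
  "nat \<Rightarrow> (nat \<Rightarrow> nat \<Rightarrow> 'a \<Rightarrow> 'a) \<Rightarrow> (nat \<Rightarrow> ('a::comm_ring_1, 'n::finite) ser) \<Rightarrow> bool" where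
  "strict_hierarchy_solution r d V \<longleftrightarrow>
     (\<forall>m\<ge>1. \<forall>b1\<in>{1..r}. \<forall>b2\<in>{1..r}.
        sder (d m b1) (V b2) = sbr (pi_gt0 (zpow (V b1) (int m - 1))) (V b2))"

end

theory Submission
  imports Defs "HOL-Library.Function_Algebras"
begin

text \<open>Write \<open>W = U z\<^sup>m\<close> and \<open>A = \<pi> W - W\<close>. The hierarchy equations say
  \<open>\<partial>\<^sub>1 W\<^sub>2 = [\<pi> W\<^sub>1, W\<^sub>2]\<close>, and \<open>[W\<^sub>1, W\<^sub>2] = 0\<close> because the \<open>U\<^sub>\<alpha>\<close> are
  conjugates of commuting constant matrices. Decomposing \<open>W = \<pi> W - A\<close> gives
  \<open>\<partial>\<^sub>1 A\<^sub>2 = [\<pi> W\<^sub>1, A\<^sub>2] - \<pi> [\<pi> W\<^sub>1, A\<^sub>2]\<close>, and applying \<open>\<pi>\<close> to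
  \<open>[W\<^sub>1, W\<^sub>2] = 0\<close> yields \<open>[\<pi> W\<^sub>1, \<pi> W\<^sub>2] = \<pi> [\<pi> W\<^sub>1, A\<^sub>2] + \<pi> [A\<^sub>1, \<pi> W\<^sub>2]\<close>,
  since \<open>\<pi>\<close> fixes products of two \<open>\<pi>\<close>-parts and kills products of two complements.
  Comparing with the unprojected identity \<open>[W\<^sub>1, W\<^sub>2] = 0\<close> makes the curvature
  vanish. Both projections \<open>\<pi>\<^sub>\<ge>\<^sub>0\<close> and \<open>\<pi>\<^sub>>\<^sub>0\<close>
  have these two properties, which is all the computation uses.\<close>

lemma mzero_eq_0: "mzero = 0"
  by (simp add: mzero_def fun_eq_iff)

lemma szero_eq_0: "szero = 0"
  by (simp add: szero_def mzero_def fun_eq_iff)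

lemma ssub_eq_diff: "ssub X Y = X - Y"
  by (simp add: ssub_def msub_def fun_eq_iff)

lemma sbr_eq: "sbr X Y = smul X Y - smul Y X"
  by (simp add: sbr_def ssub_eq_diff)

lemma sum_apply: "sum f S x = (\<Sum>i\<in>S. f i x)"
  by (induct S rule: infinite_finite_induct) auto

lemma mmul_zero_left [simp]: "mmul 0 B = 0"
  by (simp add: mmul_def fun_eq_iff)

lemma mmul_zero_right [simp]: "mmul A 0 = 0"
  by (simp add: mmul_def fun_eq_iff)

lemma mmul_diff_left: "mmul (A - B) C = mmul A C - mmul B C"
  by (simp add: mmul_def fun_eq_iff sum_subtractf algebra_simps)

lemma mmul_diff_right: "mmul A (B - C) = mmul A B - mmul A C"
  by (simp add: mmul_def fun_eq_iff sum_subtractf algebra_simps)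

lemma mmul_sum_left: "mmul (sum f S) C = (\<Sum>i\<in>S. mmul (f i) C)"
  by (auto simp: mmul_def fun_eq_iff sum_apply sum_distrib_right intro: sum.swap)

lemma mmul_sum_right: "mmul C (sum f S) = (\<Sum>i\<in>S. mmul C (f i))"
  by (auto simp: mmul_def fun_eq_iff sum_apply sum_distrib_left intro: sum.swap)

lemma mmul_assoc: "mmul (mmul A B) C = mmul A (mmul B C)"
  by (auto simp: mmul_def fun_eq_iff sum_distrib_left sum_distrib_right mult.assoc
      intro: sum.swap)

lemma mmul_mone_left [simp]: "mmul mone A = A"
  by (simp add: mmul_def mone_def fun_eq_iff if_distrib if_distribR cong: if_cong)

lemma calg_hom_additive: "calg_hom emb \<Longrightarrow> additive emb"
  by (simp add: calg_hom_def additive_def)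

lemma map_mat_mmul:
  assumes "calg_hom emb"
  shows "map_mat emb (mmul A B) = mmul (map_mat emb A) (map_mat emb B)"
proof -
  have "emb (x * y) = emb x * emb y" for x y
    using assms by (simp add: calg_hom_def)
  then show ?thesis
    by (simp add: map_mat_def mmul_def fun_eq_iff additive.sum[OF calg_hom_additive[OF assms]])
qed

lemma basis_elements_commute:
  assumes "maximal_comm_subalg T" "is_basis E r T" "a \<in> {1..r}" "b \<in> {1..r}"
  shows "mmul (E a) (E b) = mmul (E b) (E a)"
proof -
  have "E c \<in> T" if "c \<in> {1..r}" for c
  proof -
    have "E c = lincomb (\<lambda>\<beta>. if \<beta> = c then 1 else 0) E r"
      using that by (simp add: lincomb_def fun_eq_iff if_distrib if_distribR cong: if_cong)
    then have "\<exists>c'. E c = lincomb c' E r"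
      by (rule exI[where x = "\<lambda>\<beta>. if \<beta> = c then 1 else 0"])
    then show ?thesis
      using assms(2) by (simp add: is_basis_def)
  qed
  moreover have "\<forall>A\<in>T. \<forall>B\<in>T. mmul A B = mmul B A"
    using assms(1) by (simp add: maximal_comm_subalg_def comm_subalg_def)
  ultimately show ?thesis
    using assms(3,4) by blast
qed

subsection \<open>The algebra of series bounded above\<close>

lemma is_ser_iff: "is_ser X \<longleftrightarrow> (\<exists>N. \<forall>i>N. X i = 0)"
  by (simp add: is_ser_def mzero_eq_0)

lemma is_ser_common_bound:
  assumes "is_ser X" "is_ser Y" "is_ser Z"
  obtains N :: int where "\<forall>i>N. X i = 0" "\<forall>i>N. Y i = 0" "\<forall>i>N. Z i = 0"
proof -
  obtain N1 N2 N3 where "\<forall>i>N1. X i = 0" "\<forall>i>N2. Y i = 0" "\<forall>i>N3. Z i = 0"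
    using assms by (auto simp: is_ser_iff)
  then show thesis
    by (intro that[of "max N1 (max N2 N3)"]) auto
qed

lemma smul_eq_sum:
  assumes "finite S" "\<And>i. i \<notin> S \<Longrightarrow> X i = 0 \<or> Y (k - i) = 0"
  shows "smul X Y k = (\<Sum>i\<in>S. mmul (X i) (Y (k - i)))"
proof -
  have "{i. X i \<noteq> mzero \<and> Y (k - i) \<noteq> mzero} \<subseteq> S"
    using assms(2) by (auto simp: mzero_eq_0)
  then have "(\<Sum>i | X i \<noteq> mzero \<and> Y (k - i) \<noteq> mzero. mmul (X i) (Y (k - i)) a b)
      = (\<Sum>i\<in>S. mmul (X i) (Y (k - i)) a b)" for a b
    by (rule sum.mono_neutral_left[OF assms(1)]) (auto simp: mzero_eq_0)
  then show ?thesis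
    by (simp add: smul_def fun_eq_iff sum_apply)
qed

lemma smul_eq_window_sum:
  assumes "\<forall>i>N. X i = 0" "\<forall>i>N. Y i = 0"
  shows "smul X Y k = (\<Sum>i\<in>{k-N..N}. mmul (X i) (Y (k - i)))"
  by (rule smul_eq_sum) (use assms in auto)

lemma smul_eq_0I: "(\<And>i. X i = 0 \<or> Y (k - i) = 0) \<Longrightarrow> smul X Y k = 0"
  using smul_eq_sum[of "{}" X Y k] by simp

lemma smul_vanishes_above:
  assumes "\<forall>i>N. X i = 0" "\<forall>i>M. Y i = 0" "k > N + M"
  shows "smul X Y k = 0"
proof (rule smul_eq_0I)
  fix i
  show "X i = 0 \<or> Y (k - i) = 0"
    using assms by (cases "i > N") auto
qed

lemma is_ser_diff:
  fixes X Y :: "('a::ab_group_add, 'n) ser"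
  assumes "is_ser X" "is_ser Y"
  shows "is_ser (X - Y)"
proof -
  obtain N M where "\<forall>i>N. X i = 0" "\<forall>i>M. Y i = 0"
    using assms by (auto simp: is_ser_iff)
  then show ?thesis
    unfolding is_ser_iff by (intro exI[of _ "max N M"]) auto
qed

lemma is_ser_smul:
  assumes "is_ser X" "is_ser Y"
  shows "is_ser (smul X Y)"
proof -
  obtain N M where "\<forall>i>N. X i = 0" "\<forall>i>M. Y i = 0"
    using assms by (auto simp: is_ser_iff)
  then show ?thesis
    unfolding is_ser_iff by (blast intro: smul_vanishes_above)
qed

lemma is_ser_sconst: "is_ser (sconst A)"
  unfolding is_ser_def sconst_def by (auto intro!: exI[of _ 0])

lemma smul_diff_left:
  assumes "is_ser X" "is_ser Y" "is_ser Z"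
  shows "smul (X - Y) Z = smul X Z - smul Y Z"
proof
  fix k
  obtain N where X: "\<forall>i>N. X i = 0" and Y: "\<forall>i>N. Y i = 0" and Z: "\<forall>i>N. Z i = 0"
    by (rule is_ser_common_bound[OF assms])
  have "\<forall>i>N. (X - Y) i = 0"
    using X Y by simp
  then show "smul (X - Y) Z k = (smul X Z - smul Y Z) k"
    by (simp add: smul_eq_window_sum[OF _ Z] X Y mmul_diff_left sum_subtractf)
qed

lemma smul_diff_right:
  assumes "is_ser X" "is_ser Y" "is_ser Z"
  shows "smul X (Y - Z) = smul X Y - smul X Z"
proof
  fix k
  obtain N where X: "\<forall>i>N. X i = 0" and Y: "\<forall>i>N. Y i = 0" and Z: "\<forall>i>N. Z i = 0"
    by (rule is_ser_common_bound[OF assms])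
  have "\<forall>i>N. (Y - Z) i = 0"
    using Y Z by simp
  then show "smul X (Y - Z) k = (smul X Y - smul X Z) k"
    by (simp add: smul_eq_window_sum[OF X] Y Z mmul_diff_right sum_subtractf)
qed

lemma smul_assoc:
  assumes "is_ser X" "is_ser Y" "is_ser Z"
  shows "smul (smul X Y) Z = smul X (smul Y Z)"
proof
  fix k
  obtain N where X: "\<forall>i>N. X i = 0" and Y: "\<forall>i>N. Y i = 0" and Z: "\<forall>i>N. Z i = 0"
    by (rule is_ser_common_bound[OF assms])
  have XY: "\<forall>j>2*N. smul X Y j = 0" and YZ: "\<forall>j>2*N. smul Y Z j = 0"
    using smul_vanishes_above[OF X Y] smul_vanishes_above[OF Y Z] by auto
  define I where "I = {k-2*N..N}"
  define J where "J = {k-N..2*N}"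
  have "smul (smul X Y) Z k = (\<Sum>j\<in>J. mmul (smul X Y j) (Z (k - j)))"
    by (rule smul_eq_sum) (use XY Z in \<open>auto simp: J_def\<close>)
  also have "\<dots> = (\<Sum>j\<in>J. \<Sum>i\<in>I. mmul (mmul (X i) (Y (j - i))) (Z (k - j)))"
  proof (rule sum.cong)
    fix j assume "j \<in> J"
    then have "smul X Y j = (\<Sum>i\<in>I. mmul (X i) (Y (j - i)))"
      by (intro smul_eq_sum) (use X Y in \<open>auto simp: I_def J_def\<close>)
    then show "mmul (smul X Y j) (Z (k - j))
        = (\<Sum>i\<in>I. mmul (mmul (X i) (Y (j - i))) (Z (k - j)))"
      by (simp add: mmul_sum_left)
  qed simp
  also have "\<dots> = (\<Sum>i\<in>I. mmul (X i) (\<Sum>j\<in>J. mmul (Y (j - i)) (Z (k - j))))"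
    by (subst sum.swap) (simp add: mmul_assoc mmul_sum_right)
  also have "\<dots> = (\<Sum>i\<in>I. mmul (X i) (smul Y Z (k - i)))"
  proof (rule sum.cong)
    fix i assume i: "i \<in> I"
    have "smul Y Z (k - i) = (\<Sum>l\<in>(\<lambda>j. j - i) ` J. mmul (Y l) (Z (k - i - l)))"
      by (rule smul_eq_sum) (use Y Z i in \<open>auto simp: I_def J_def image_iff\<close>)
    also have "\<dots> = (\<Sum>j\<in>J. mmul (Y (j - i)) (Z (k - j)))"
      by (subst sum.reindex) (auto simp: inj_on_def)
    finally show "mmul (X i) (\<Sum>j\<in>J. mmul (Y (j - i)) (Z (k - j)))
        = mmul (X i) (smul Y Z (k - i))" by simp
  qed simp
  also have "\<dots> = smul X (smul Y Z) k"
  proof (rule smul_eq_sum[symmetric])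
    fix i assume "i \<notin> I"
    then have "i > N \<or> k - i > 2*N"
      by (auto simp: I_def)
    then show "X i = 0 \<or> smul Y Z (k - i) = 0"
      using X YZ by auto
  qed (simp add: I_def)
  finally show "smul (smul X Y) Z k = smul X (smul Y Z) k" .
qed

lemma smul_sone_left [simp]: "smul sone X = X"
proof
  fix k
  have "smul sone X k = (\<Sum>i\<in>{0}. mmul (sone i) (X (k - i)))"
    by (rule smul_eq_sum) (auto simp: sone_def mzero_eq_0)
  then show "smul sone X k = X k"
    by (simp add: sone_def)
qed

lemma smul_sconst: "smul (sconst A) (sconst B) = sconst (mmul A B)"
proof
  fix k
  have "smul (sconst A) (sconst B) k = (\<Sum>i\<in>{0}. mmul (sconst A i) (sconst B (k - i)))"
    by (rule smul_eq_sum) (auto simp: sconst_def mzero_eq_0)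
  then show "smul (sconst A) (sconst B) k = sconst (mmul A B) k"
    by (simp add: sconst_def mzero_eq_0)
qed

lemma sbr_diff_left:
  "is_ser X \<Longrightarrow> is_ser Y \<Longrightarrow> is_ser Z \<Longrightarrow> sbr (X - Y) Z = sbr X Z - sbr Y Z"
  by (simp add: sbr_eq smul_diff_left smul_diff_right)

lemma sbr_diff_right:
  "is_ser X \<Longrightarrow> is_ser Y \<Longrightarrow> is_ser Z \<Longrightarrow> sbr X (Y - Z) = sbr X Y - sbr X Z"
  by (simp add: sbr_eq smul_diff_left smul_diff_right)

lemma sbr_swap: "sbr Y X = - sbr X Y"
  by (simp add: sbr_eq)

lemma sbr_eq_0_iff: "sbr X Y = 0 \<longleftrightarrow> smul X Y = smul Y X"
  by (simp add: sbr_eq)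

lemma conjugates_commute:
  assumes "is_ser G" "is_ser H" "smul H G = sone" "is_ser C1" "is_ser C2"
    and "smul C1 C2 = smul C2 C1"
  shows "smul (smul (smul G C1) H) (smul (smul G C2) H)
       = smul (smul (smul G C2) H) (smul (smul G C1) H)"
proof -
  have conj_mult: "smul (smul (smul G X) H) (smul (smul G Y) H) = smul (smul G (smul X Y)) H"
    if X: "is_ser X" and Y: "is_ser Y" for X Y
  proof -
    have GX: "is_ser (smul G X)" and GY: "is_ser (smul G Y)"
      using assms(1) X Y by (simp_all add: is_ser_smul)
    have "smul (smul (smul G X) H) (smul (smul G Y) H)
        = smul (smul G X) (smul (smul H (smul G Y)) H)"
      using GX GY assms(2) by (simp add: smul_assoc is_ser_smul)
    also have "smul H (smul G Y) = Y"
      using assms(1-3) Y by (simp add: smul_assoc[symmetric])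
    also have "smul (smul G X) (smul Y H) = smul (smul G (smul X Y)) H"
      using assms(1,2) X Y GX by (simp add: smul_assoc is_ser_smul)
    finally show ?thesis .
  qed
  show ?thesis
    using conj_mult[OF assms(4,5)] conj_mult[OF assms(5,4)] assms(6) by simp
qed

lemma is_ser_zpow: "is_ser X \<Longrightarrow> is_ser (zpow X m)"
  unfolding is_ser_iff zpow_def by (metis add.commute less_diff_eq)

lemma zpow_diff: "zpow (X - Y) m = zpow X m - zpow Y m"
  by (simp add: zpow_def fun_eq_iff)

lemma zpow_smul_right: "zpow (smul X Y) m = smul X (zpow Y m)"
  by (simp add: zpow_def smul_def fun_eq_iff algebra_simps)

lemma zpow_smul_left: "zpow (smul X Y) m = smul (zpow X m) Y"
proof (rule ext)+
  fix k a b
  have shift: "{i. X (i - m) \<noteq> mzero \<and> Y (k - i) \<noteq> mzero}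
      = (\<lambda>i. i + m) ` {i. X i \<noteq> mzero \<and> Y (k - m - i) \<noteq> mzero}"
    by (auto simp: image_iff algebra_simps intro!: exI[of _ "_ - m"])
  show "zpow (smul X Y) m k a b = smul (zpow X m) Y k a b"
    unfolding zpow_def smul_def shift by (subst sum.reindex) (auto simp: inj_on_def algebra_simps)
qed

lemma smul_zpow_zpow: "smul (zpow X a) (zpow Y b) = zpow (smul X Y) (a + b)"
  by (simp add: zpow_smul_left[symmetric] zpow_smul_right[symmetric])
    (simp add: zpow_def diff_diff_eq add.commute)

lemma zpow_sbr: "zpow (sbr X Y) m = sbr X (zpow Y m)"
  unfolding sbr_eq zpow_diff zpow_smul_right[of X Y] zpow_smul_left[of Y X] ..

lemma zpow_commute:
  "smul X Y = smul Y X \<Longrightarrow> smul (zpow X a) (zpow Y b) = smul (zpow Y b) (zpow X a)"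
  by (simp add: smul_zpow_zpow add.commute)

lemma sder_diff: "additive D \<Longrightarrow> sder D (X - Y) = sder D X - sder D Y"
  by (simp add: sder_def fun_eq_iff additive.diff)

lemma sder_zpow: "sder D (zpow X m) = zpow (sder D X) m"
  by (simp add: sder_def zpow_def)

subsection \<open>Zero curvature for a splitting of the series algebra\<close>

text \<open>\<open>P\<close> abstracts the projection onto the first summand of a splitting of the series
  algebra into two subalgebras, such as \<open>\<pi>\<^sub>\<ge>\<^sub>0\<close> for
  \<open>gl\<^sub>n(R)[z] \<oplus> z\<^sup>-\<^sup>1 gl\<^sub>n(R)[[z\<^sup>-\<^sup>1]]\<close>.\<close>

locale splitting_projection = additive P
  for P :: "('a::comm_ring_1, 'n::finite) ser \<Rightarrow> ('a, 'n) ser" +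
  assumes is_ser_P: "is_ser X \<Longrightarrow> is_ser (P X)"
    and P_smul_P: "P (smul (P X) (P Y)) = smul (P X) (P Y)"
    and P_smul_complement: "P (smul (P X - X) (P Y - Y)) = 0"
    and sder_P: "additive D \<Longrightarrow> sder D (P X) = P (sder D X)"
begin

lemma P_sbr_P: "P (sbr (P X) (P Y)) = sbr (P X) (P Y)"
  by (simp add: sbr_eq diff P_smul_P)

lemma P_sbr_complement: "P (sbr (P X - X) (P Y - Y)) = 0"
  by (simp add: sbr_eq diff P_smul_complement)

theorem zero_curvature:
  assumes D1: "additive D1" and D2: "additive D2"
    and W: "is_ser W1" "is_ser W2" and comm: "smul W1 W2 = smul W2 W1"
    and evol1: "sder D1 W2 = sbr (P W1) W2" and evol2: "sder D2 W1 = sbr (P W2) W1"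
  shows "sder D1 (P W2 - W2) - sder D2 (P W1 - W1) - sbr (P W1 - W1) (P W2 - W2) = 0"
proof -
  define B1 A1 B2 A2 where "B1 = P W1" "A1 = P W1 - W1" "B2 = P W2" "A2 = P W2 - W2"
  have ser: "is_ser B1" "is_ser A1" "is_ser B2" "is_ser A2"
    using W by (simp_all add: B1_A1_B2_A2_def is_ser_P is_ser_diff)
  have W_eq: "W1 = B1 - A1" "W2 = B2 - A2"
    by (simp_all add: B1_A1_B2_A2_def)
  have sbr_W: "sbr B W2 = sbr B B2 - sbr B A2" "sbr B W1 = sbr B B1 - sbr B A1"
    if "is_ser B" for B
    by (simp_all add: W_eq sbr_diff_right ser that)
  have dA2: "sder D1 A2 = sbr B1 A2 - P (sbr B1 A2)"
    using evol1 sbr_W(1)[OF ser(1)] P_sbr_P[of W1 W2]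
    by (simp add: B1_A1_B2_A2_def sder_diff[OF D1] sder_P[OF D1] diff)
  have dA1: "sder D2 A1 = sbr B2 A1 - P (sbr B2 A1)"
    using evol2 sbr_W(2)[OF ser(3)] P_sbr_P[of W2 W1]
    by (simp add: B1_A1_B2_A2_def sder_diff[OF D2] sder_P[OF D2] diff)
  have commutator: "sbr B1 B2 - sbr B1 A2 - sbr A1 B2 + sbr A1 A2 = 0"
    using comm unfolding sbr_eq_0_iff[symmetric] W_eq
    by (simp add: sbr_diff_left sbr_diff_right ser is_ser_diff algebra_simps)
  then have "P (sbr B1 B2 - sbr B1 A2 - sbr A1 B2 + sbr A1 A2) = 0"
    by (simp add: zero)
  then have projected: "sbr B1 B2 = P (sbr B1 A2) + P (sbr A1 B2)"
    using P_sbr_P[of W1 W2] P_sbr_complement[of W1 W2]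
    by (simp add: add diff B1_A1_B2_A2_def algebra_simps)
  have "sder D1 A2 - sder D2 A1 - sbr A1 A2
      = (sbr B1 A2 + sbr A1 B2 - sbr A1 A2) - (P (sbr B1 A2) + P (sbr A1 B2))"
    by (simp add: dA1 dA2 sbr_swap[of B2] minus algebra_simps)
  also have "\<dots> = 0"
    using commutator projected by (simp add: algebra_simps)
  finally show ?thesis
    by (simp add: B1_A1_B2_A2_def)
qed

lemma zero_curvature_shifted:
  assumes "additive D1" "additive D2" "is_ser U1" "is_ser U2"
    and "smul U1 U2 = smul U2 U1"
    and "sder D1 U2 = sbr (P (zpow U1 e1)) U2" "sder D2 U1 = sbr (P (zpow U2 e2)) U1"
  shows "ssub (ssub (sder D1 (ssub (P (zpow U2 e2)) (zpow U2 e2)))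
                    (sder D2 (ssub (P (zpow U1 e1)) (zpow U1 e1))))
              (sbr (ssub (P (zpow U1 e1)) (zpow U1 e1)) (ssub (P (zpow U2 e2)) (zpow U2 e2)))
         = szero"
  unfolding ssub_eq_diff szero_eq_0
  using assms by (intro zero_curvature)
    (simp_all add: is_ser_zpow zpow_commute sder_zpow zpow_sbr)

end

definition truncate_below :: "int \<Rightarrow> ('a::zero, 'n) ser \<Rightarrow> ('a, 'n) ser" where
  "truncate_below c X = (\<lambda>k. if c \<le> k then X k else 0)"

lemma pi_ge0_eq_truncate: "pi_ge0 = truncate_below 0"
  by (simp add: fun_eq_iff pi_ge0_def truncate_below_def mzero_eq_0)

lemma pi_gt0_eq_truncate: "pi_gt0 = truncate_below 1"
  by (auto simp: fun_eq_iff pi_gt0_def truncate_below_def mzero_eq_0)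

text \<open>The cut-off must be \<open>0\<close> or \<open>1\<close>: products of two truncated series live in degrees
  \<open>\<ge> 2c \<ge> c\<close>, products of two remainders in degrees \<open>\<le> 2c - 2 < c\<close>.\<close>

lemma splitting_projection_truncate_below:
  assumes "0 \<le> c" "c \<le> 1"
  shows "splitting_projection (truncate_below c :: ('a::comm_ring_1, 'n::finite) ser \<Rightarrow> _)"
proof
  fix X Y :: "('a, 'n) ser" and D :: "'a \<Rightarrow> 'a"
  show "truncate_below c (X + Y) = truncate_below c X + truncate_below c Y"
    by (simp add: truncate_below_def fun_eq_iff)
  show "is_ser X \<Longrightarrow> is_ser (truncate_below c X)"
    by (auto simp: is_ser_iff truncate_below_def)
  show "truncate_below c (smul (truncate_below c X) (truncate_below c Y))
      = smul (truncate_below c X) (truncate_below c Y)"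
  proof
    fix k
    have "smul (truncate_below c X) (truncate_below c Y) k = 0" if "k < c"
      by (rule smul_eq_0I) (use that assms in \<open>auto simp: truncate_below_def\<close>)
    then show "truncate_below c (smul (truncate_below c X) (truncate_below c Y)) k
        = smul (truncate_below c X) (truncate_below c Y) k"
      by (simp add: truncate_below_def fun_eq_iff)
  qed
  show "truncate_below c (smul (truncate_below c X - X) (truncate_below c Y - Y)) = 0"
  proof
    fix k
    have "smul (truncate_below c X - X) (truncate_below c Y - Y) k = 0" if "c \<le> k"
      by (rule smul_eq_0I) (use that assms in \<open>auto simp: truncate_below_def\<close>)
    then show "truncate_below c (smul (truncate_below c X - X) (truncate_below c Y - Y)) k = 0 k"
      by (simp add: truncate_below_def fun_eq_iff)
  qed
  show "additive D \<Longrightarrow> sder D (truncate_below c X) = truncate_below c (sder D X)"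
    by (simp add: sder_def truncate_below_def fun_eq_iff additive.zero)
qed

lemma comm_derivations_additive:
  "comm_derivations emb d M r \<Longrightarrow> m \<in> M \<Longrightarrow> a \<in> {1..r} \<Longrightarrow> additive (d m a)"
  by (simp add: comm_derivations_def C_derivation_def additive_def)

lemma hierarchy_zero_curvature:
  fixes U :: "nat \<Rightarrow> ('a::comm_ring_1, 'n::finite) ser"
  assumes "\<And>m a. a \<in> {1..r} \<Longrightarrow> additive (d m a)" and "\<And>a. is_ser (U a)"
    and "\<And>a b. a \<in> {1..r} \<Longrightarrow> b \<in> {1..r} \<Longrightarrow> smul (U a) (U b) = smul (U b) (U a)"
    and "hierarchy_solution r d U"
  shows "let A = (\<lambda>m \<alpha>. ssub (pi_ge0 (zpow (U \<alpha>) (int m))) (zpow (U \<alpha>) (int m)))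
         in \<forall>m1 m2. \<forall>a1\<in>{1..r}. \<forall>a2\<in>{1..r}.
              ssub (ssub (sder (d m1 a1) (A m2 a2)) (sder (d m2 a2) (A m1 a1)))
                   (sbr (A m1 a1) (A m2 a2)) = szero"
  using assms(4) unfolding Let_def hierarchy_solution_def pi_ge0_eq_truncate
  by (intro allI ballI
      splitting_projection.zero_curvature_shifted[OF splitting_projection_truncate_below])
    (simp_all add: assms(1-3))

lemma strict_hierarchy_zero_curvature:
  fixes V :: "nat \<Rightarrow> ('a::comm_ring_1, 'n::finite) ser"
  assumes "\<And>m b. m \<ge> 1 \<Longrightarrow> b \<in> {1..r} \<Longrightarrow> additive (d m b)" and "\<And>b. is_ser (V b)"
    and "\<And>a b. a \<in> {1..r} \<Longrightarrow> b \<in> {1..r} \<Longrightarrow> smul (V a) (V b) = smul (V b) (V a)"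
    and "strict_hierarchy_solution r d V"
  shows "let D = (\<lambda>m \<beta>. ssub (pi_gt0 (zpow (V \<beta>) (int m - 1))) (zpow (V \<beta>) (int m - 1)))
         in \<forall>m1\<ge>1. \<forall>m2\<ge>1. \<forall>b1\<in>{1..r}. \<forall>b2\<in>{1..r}.
              ssub (ssub (sder (d m1 b1) (D m2 b2)) (sder (d m2 b2) (D m1 b1)))
                   (sbr (D m1 b1) (D m2 b2)) = szero"
  using assms(4) unfolding Let_def strict_hierarchy_solution_def pi_gt0_eq_truncate
  by (intro allI impI ballI
      splitting_projection.zero_curvature_shifted[OF splitting_projection_truncate_below])
    (simp_all add: assms(1-3))

lemma is_ser_G_lt0: "G_lt0 g \<Longrightarrow> is_ser g"
  unfolding G_lt0_def is_ser_def by blast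

lemma is_ser_G_le0: "G_le0 K \<Longrightarrow> is_ser K"
  unfolding G_le0_def is_ser_def by blast

lemma is_ser_Uop: "is_ser g \<Longrightarrow> is_sinv g ginv \<Longrightarrow> is_ser (Uop emb E g ginv \<alpha>)"
  by (simp add: Uop_def is_sinv_def is_ser_smul is_ser_sconst)

lemma is_ser_Vop: "is_ser K \<Longrightarrow> is_sinv K Kinv \<Longrightarrow> is_ser (Vop emb E K Kinv \<beta>)"
  by (simp add: Vop_def is_sinv_def is_ser_smul is_ser_zpow is_ser_sconst)

lemma Uop_commute:
  assumes "is_ser g" "is_sinv g ginv"
    and "mmul (map_mat emb (E a)) (map_mat emb (E b)) = mmul (map_mat emb (E b)) (map_mat emb (E a))"
  shows "smul (Uop emb E g ginv a) (Uop emb E g ginv b) = smul (Uop emb E g ginv b) (Uop emb E g ginv a)"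
  using assms unfolding Uop_def is_sinv_def
  by (intro conjugates_commute) (simp_all add: is_ser_sconst smul_sconst)

lemma Vop_commute:
  assumes "is_ser K" "is_sinv K Kinv"
    and "mmul (map_mat emb (E a)) (map_mat emb (E b)) = mmul (map_mat emb (E b)) (map_mat emb (E a))"
  shows "smul (Vop emb E K Kinv a) (Vop emb E K Kinv b) = smul (Vop emb E K Kinv b) (Vop emb E K Kinv a)"
  using assms unfolding Vop_def is_sinv_def
  by (intro conjugates_commute) (simp_all add: is_ser_zpow is_ser_sconst smul_zpow_zpow smul_sconst)

lemma basis_images_commute:
  assumes "calg_hom emb" "maximal_comm_subalg T" "is_basis E r T" "a \<in> {1..r}" "b \<in> {1..r}"
  shows "mmul (map_mat emb (E a)) (map_mat emb (E b)) = mmul (map_mat emb (E b)) (map_mat emb (E a))"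
  using basis_elements_commute[OF assms(2-5)] by (simp add: map_mat_mmul[OF assms(1), symmetric])

theorem corollary2p1:
  fixes emb :: "complex \<Rightarrow> 'a::comm_ring_1"
    and E :: "nat \<Rightarrow> (complex, 'n::finite) mat"
    and r :: nat
  assumes "calg_hom emb"
    and "maximal_comm_subalg T"
    and "is_basis E r T"
  shows
    "(\<forall>(d :: nat \<Rightarrow> nat \<Rightarrow> 'a \<Rightarrow> 'a) (g :: ('a, 'n) ser) ginv.
        comm_derivations emb d UNIV r \<and> G_lt0 g \<and> is_sinv g ginv
        \<and> hierarchy_solution r d (Uop emb E g ginv) \<longrightarrow>
        (let U = Uop emb E g ginv;
             A = (\<lambda>m \<alpha>. ssub (pi_ge0 (zpow (U \<alpha>) (int m))) (zpow (U \<alpha>) (int m)))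
         in \<forall>m1 m2. \<forall>a1\<in>{1..r}. \<forall>a2\<in>{1..r}.
              ssub (ssub (sder (d m1 a1) (A m2 a2)) (sder (d m2 a2) (A m1 a1)))
                   (sbr (A m1 a1) (A m2 a2)) = szero))
   \<and> (\<forall>(d :: nat \<Rightarrow> nat \<Rightarrow> 'a \<Rightarrow> 'a) (K :: ('a, 'n) ser) Kinv.
        comm_derivations emb d {1..} r \<and> G_le0 K \<and> is_sinv K Kinv
        \<and> strict_hierarchy_solution r d (Vop emb E K Kinv) \<longrightarrow>
        (let V = Vop emb E K Kinv;
             D = (\<lambda>m \<beta>. ssub (pi_gt0 (zpow (V \<beta>) (int m - 1))) (zpow (V \<beta>) (int m - 1)))
         in \<forall>m1\<ge>1. \<forall>m2\<ge>1. \<forall>b1\<in>{1..r}. \<forall>b2\<in>{1..r}.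
              ssub (ssub (sder (d m1 b1) (D m2 b2)) (sder (d m2 b2) (D m1 b1)))
                   (sbr (D m1 b1) (D m2 b2)) = szero))"
proof (intro conjI allI impI, goal_cases)
  case (1 d g ginv)
  then have ser: "is_ser g" and inv: "is_sinv g ginv"
    by (simp_all add: is_ser_G_lt0)
  have "\<And>m a. a \<in> {1..r} \<Longrightarrow> additive (d m a)"
    using 1 comm_derivations_additive by blast
  moreover have "\<And>a. is_ser (Uop emb E g ginv a)"
    using ser inv by (rule is_ser_Uop)
  moreover have "smul (Uop emb E g ginv a) (Uop emb E g ginv b)
      = smul (Uop emb E g ginv b) (Uop emb E g ginv a)" if "a \<in> {1..r}" "b \<in> {1..r}" for a b
    using ser inv basis_images_commute[OF assms that] by (rule Uop_commute)
  ultimately show ?case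
    using 1 hierarchy_zero_curvature[of r d "Uop emb E g ginv"] unfolding Let_def by blast
next
  case (2 d K Kinv)
  then have ser: "is_ser K" and inv: "is_sinv K Kinv"
    by (simp_all add: is_ser_G_le0)
  have "\<And>m b. m \<ge> 1 \<Longrightarrow> b \<in> {1..r} \<Longrightarrow> additive (d m b)"
    using 2 comm_derivations_additive by (metis atLeast_iff)
  moreover have "\<And>b. is_ser (Vop emb E K Kinv b)"
    using ser inv by (rule is_ser_Vop)
  moreover have "smul (Vop emb E K Kinv a) (Vop emb E K Kinv b)
      = smul (Vop emb E K Kinv b) (Vop emb E K Kinv a)" if "a \<in> {1..r}" "b \<in> {1..r}" for a b
    using ser inv basis_images_commute[OF assms that] by (rule Vop_commute)
  ultimately show ?case
    using 2 strict_hierarchy_zero_curvature[of r d "Vop emb E K Kinv"] unfolding Let_def by blast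
qed

end
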